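(* For all $m,d\ge1$, the polynomial $P_d(x_1,\dots,x_m)$ can be computed by a non-commutative UPT circuit of size $O(m^2d)$.
   Context: Let $T_d$ be the complete binary tree of depth $d$ ($2^d$ leaves, $D=2^{d+1}-1$ nodes), with nodes $v_1,\dots,v_D$ listed in in-order (left subtree recursively, root, right subtree recursively). A colouring $\gamma:T_d\to\mathbb{Z}_m$ is legal if for every internal node $u$ with children $v,w$, $\gamma(u)=\gamma(v)+\gamma(w)\bmod m$. Identify $\mathbb{Z}_m$ with $\{1,\dots,m\}$. $P_d(x_1,\dots,x_m)=\sum_{\gamma\text{ legal}}x_{\gamma(v_1)}\cdots x_{\gamma(v_D)}\in\mathbb{F}\langle x_1,\dots,x_m\rangle$. A non-commutative circuit is a DAG with one output, leaves variables or constants, $+$ gates and $\times$ gates with ordered children; a parse tree keeps all children of $\times$ gates and exactly one child of each $+$ gate; a circuit computing a homogeneous polynomial is UPT if all parse trees have the same shape (ordered rooted tree with $+/\times$ labels, forgetting gate names). *)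

theory Defs
  imports Main
begin

text \<open>A non-commutative polynomial in variables x_1, x_2, ... over 'a is represented by
its coefficient function on words (monomials); the word [i1,...,ik] stands for the
monomial x_i1 * ... * x_ik.\<close>

type_synonym 'a ncpoly = "nat list \<Rightarrow> 'a"

definition nczero :: "'a::field ncpoly" where "nczero = (\<lambda>w. 0)"
definition ncone :: "'a::field ncpoly" where "ncone = (\<lambda>w. if w = [] then 1 else 0)"
definition ncconst :: "'a::field \<Rightarrow> 'a ncpoly" where
  "ncconst c = (\<lambda>w. if w = [] then c else 0)"
definition ncvar :: "nat \<Rightarrow> 'a::field ncpoly" where
  "ncvar i = (\<lambda>w. if w = [i] then 1 else 0)"
definition ncadd :: "'a::field ncpoly \<Rightarrow> 'a ncpoly \<Rightarrow> 'a ncpoly" where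
  "ncadd p q = (\<lambda>w. p w + q w)"
definition ncmul :: "'a::field ncpoly \<Rightarrow> 'a ncpoly \<Rightarrow> 'a ncpoly" where
  "ncmul p q = (\<lambda>w. \<Sum>k\<le>length w. p (take k w) * q (drop k w))"

datatype ctree = CLeaf nat | CNode ctree nat ctree

fun root_col :: "ctree \<Rightarrow> nat" where
  "root_col (CLeaf a) = a"
| "root_col (CNode l a r) = a"

fun complete_depth :: "nat \<Rightarrow> ctree \<Rightarrow> bool" where
  "complete_depth d (CLeaf a) = (d = 0)"
| "complete_depth d (CNode l a r) =
     (d > 0 \<and> complete_depth (d - 1) l \<and> complete_depth (d - 1) r)"

text \<open>All colours lie in Z_m identified with {1..m}.\<close>
fun colours_in :: "nat \<Rightarrow> ctree \<Rightarrow> bool" where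
  "colours_in m (CLeaf a) = (a \<in> {1..m})"
| "colours_in m (CNode l a r) = (a \<in> {1..m} \<and> colours_in m l \<and> colours_in m r)"

fun legal :: "nat \<Rightarrow> ctree \<Rightarrow> bool" where
  "legal m (CLeaf a) = True"
| "legal m (CNode l a r) =
     (a mod m = (root_col l + root_col r) mod m \<and> legal m l \<and> legal m r)"

fun inorder :: "ctree \<Rightarrow> nat list" where
  "inorder (CLeaf a) = [a]"
| "inorder (CNode l a r) = inorder l @ [a] @ inorder r"

definition legal_colourings :: "nat \<Rightarrow> nat \<Rightarrow> ctree set" where
  "legal_colourings m d = {t. complete_depth d t \<and> colours_in m t \<and> legal m t}"

text \<open>P_d = sum over legal colourings of the monomial x_{gamma(v_1)} ... x_{gamma(v_D)}:
the coefficient of a word w is the number of legal colourings with in-order word w.\<close>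
definition Pd :: "nat \<Rightarrow> nat \<Rightarrow> 'a::field ncpoly" where
  "Pd m d = (\<lambda>w. of_nat (card {t \<in> legal_colourings m d. inorder t = w}))"

text \<open>A circuit is a list of gates in topological order; the children of gate k
are indices < k; the output is the last gate.\<close>
datatype 'a gate = GVar nat | GConst 'a | GPlus "nat list" | GTimes "nat list"

fun gate_children :: "'a gate \<Rightarrow> nat list" where
  "gate_children (GVar i) = []"
| "gate_children (GConst c) = []"
| "gate_children (GPlus cs) = cs"
| "gate_children (GTimes cs) = cs"

definition wf_circuit :: "'a gate list \<Rightarrow> bool" where
  "wf_circuit C = (C \<noteq> [] \<and> (\<forall>k < length C. \<forall>j \<in> set (gate_children (C ! k)). j < k))"

definition circuit_size :: "'a gate list \<Rightarrow> nat" where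
  "circuit_size C = length C + (\<Sum>g\<leftarrow>C. length (gate_children g))"

fun gate_val :: "'a::field ncpoly list \<Rightarrow> 'a gate \<Rightarrow> 'a ncpoly" where
  "gate_val vs (GVar i) = ncvar i"
| "gate_val vs (GConst c) = ncconst c"
| "gate_val vs (GPlus cs) = foldr ncadd (map (\<lambda>j. vs ! j) cs) nczero"
| "gate_val vs (GTimes cs) = foldr ncmul (map (\<lambda>j. vs ! j) cs) ncone"

primrec gate_vals :: "'a::field gate list \<Rightarrow> nat \<Rightarrow> 'a ncpoly list" where
  "gate_vals C 0 = []"
| "gate_vals C (Suc k) = gate_vals C k @ [gate_val (gate_vals C k) (C ! k)]"

definition circuit_output :: "'a::field gate list \<Rightarrow> 'a ncpoly" where
  "circuit_output C = last (gate_vals C (length C))"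

definition computes :: "'a::field gate list \<Rightarrow> 'a ncpoly \<Rightarrow> bool" where
  "computes C p = (wf_circuit C \<and> circuit_output C = p)"

text \<open>Shapes of parse trees: ordered rooted trees with leaves and +/x labels.
A parse tree keeps all children of a product gate and exactly one child of a sum gate.\<close>
datatype shape = SLeaf | SPlus shape | STimes "shape list"

fun gate_shapes :: "shape set list \<Rightarrow> 'a gate \<Rightarrow> shape set" where
  "gate_shapes ss (GVar i) = {SLeaf}"
| "gate_shapes ss (GConst c) = {SLeaf}"
| "gate_shapes ss (GPlus cs) = (\<Union>j \<in> set cs. SPlus ` (ss ! j))"
| "gate_shapes ss (GTimes cs) =
     {STimes ts | ts. list_all2 (\<lambda>t j. t \<in> ss ! j) ts cs}"

primrec shapes_upto :: "'a gate list \<Rightarrow> nat \<Rightarrow> shape set list" where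
  "shapes_upto C 0 = []"
| "shapes_upto C (Suc k) = shapes_upto C k @ [gate_shapes (shapes_upto C k) (C ! k)]"

definition parse_tree_shapes :: "'a gate list \<Rightarrow> shape set" where
  "parse_tree_shapes C = last (shapes_upto C (length C))"

definition UPT :: "'a gate list \<Rightarrow> bool" where
  "UPT C = (\<forall>s \<in> parse_tree_shapes C. \<forall>t \<in> parse_tree_shapes C. s = t)"

end

(*
  Let Q(d, a) be the sum over the legal colourings of T_d with root colour a. Then
  P_d = \<Sum>_a Q(d, a), Q(0, a) = x_a, and Q(d + 1, a) = \<Sum>_b Q(d, b) x_a Q(d, a - b): the in-order word
  of a colouring is the word of the left subtree, the root colour, and the word of the right subtree,
  and once the left subtree has root colour b, legality forces root colour a - b on the right.
  Computing all Q(k, a) level by level costs m^2 product gates of fan-in 3 and m sum gates of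
  fan-in m per level, so O(m^2 d) in total, and by induction on k every parse tree below the gate
  for Q(k, a) has the same shape.
*)
theory Submission
  imports Defs
begin

abbreviation ncsum :: "'a::field ncpoly list \<Rightarrow> 'a ncpoly" where
  "ncsum ps \<equiv> foldr ncadd ps nczero"

abbreviation ncprod :: "'a::field ncpoly list \<Rightarrow> 'a ncpoly" where
  "ncprod ps \<equiv> foldr ncmul ps ncone"

lemma ncsum_apply: "ncsum (map f xs) w = (\<Sum>x\<leftarrow>xs. f x w)"
  by (induct xs) (auto simp: ncadd_def nczero_def)

lemma ncmul_homogeneous_left:
  assumes "\<And>u. p u \<noteq> 0 \<Longrightarrow> length u = n"
  shows "ncmul p q w = (if n \<le> length w then p (take n w) * q (drop n w) else 0)"
proof -
  have "ncmul p q w = (\<Sum>k\<le>length w. if k = n then p (take n w) * q (drop n w) else 0)"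
    unfolding ncmul_def
  proof (rule sum.cong)
    fix k assume "k \<in> {..length w}"
    then have "k \<noteq> n \<Longrightarrow> p (take k w) = 0" using assms[of "take k w"] by force
    then show "p (take k w) * q (drop k w) = (if k = n then p (take n w) * q (drop n w) else 0)"
      by auto
  qed simp
  then show ?thesis by simp
qed

lemma ncmul_ncone_right: "ncmul p ncone = p"
proof
  fix w
  have "ncmul p ncone w = (\<Sum>k\<le>length w. if k = length w then p w else 0)"
    unfolding ncmul_def ncone_def by (rule sum.cong) auto
  then show "ncmul p ncone w = p w" by simp
qed

lemma ncvar_homogeneous: "ncvar a u \<noteq> (0::'a::field) \<Longrightarrow> length u = 1"
  by (auto simp: ncvar_def split: if_splits)

lemma ncprod_var_middle_apply:
  assumes "\<And>u. p u \<noteq> 0 \<Longrightarrow> length u = L"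
  shows "ncprod [p, ncvar a, q] w =
    (if take 1 (drop L w) = [a] then p (take L w) * q (drop (Suc L) w) else 0)"
proof (cases "take 1 (drop L w) = [a]")
  case True
  then have "drop L w \<noteq> []" by auto
  then have "L \<le> length w" "Suc 0 \<le> length w - L" by simp_all
  with True show ?thesis
    by (simp add: ncmul_ncone_right ncmul_homogeneous_left[OF assms]
        ncmul_homogeneous_left[OF ncvar_homogeneous] ncvar_def drop_Suc)
next
  case False
  then show ?thesis
    by (simp add: ncmul_ncone_right ncmul_homogeneous_left[OF assms]
        ncmul_homogeneous_left[OF ncvar_homogeneous] ncvar_def)
qed

lemma length_inorder_complete_depth:
  "complete_depth d t \<Longrightarrow> Suc (length (inorder t)) = 2 ^ Suc d"
proof (induct t arbitrary: d)
  case (CNode l a r)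
  then obtain d' where d: "d = Suc d'" by (cases d) auto
  with CNode have "Suc (length (inorder l)) = 2 ^ Suc d'" "Suc (length (inorder r)) = 2 ^ Suc d'"
    by auto
  with d show ?case by simp
qed simp

lemma colours_in_root_col: "colours_in m t \<Longrightarrow> root_col t \<in> {1..m}"
  by (cases t) auto

lemma finite_complete_colourings: "finite {t. complete_depth d t \<and> colours_in m t}"
proof (induct d)
  case 0
  have "{t. complete_depth 0 t \<and> colours_in m t} \<subseteq> CLeaf ` {1..m}"
  proof
    fix t assume "t \<in> {t. complete_depth 0 t \<and> colours_in m t}"
    then show "t \<in> CLeaf ` {1..m}" by (cases t) auto
  qed
  then show ?case by (rule finite_subset) simp
next
  case (Suc d)
  let ?A = "{t. complete_depth d t \<and> colours_in m t}"
  have "{t. complete_depth (Suc d) t \<and> colours_in m t}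
      \<subseteq> (\<lambda>(l, a, r). CNode l a r) ` (?A \<times> {1..m} \<times> ?A)"
  proof
    fix t assume "t \<in> {t. complete_depth (Suc d) t \<and> colours_in m t}"
    then show "t \<in> (\<lambda>(l, a, r). CNode l a r) ` (?A \<times> {1..m} \<times> ?A)"
      by (cases t) (auto simp: image_iff)
  qed
  then show ?case by (rule finite_subset) (use Suc in simp)
qed

definition rooted_colourings :: "nat \<Rightarrow> nat \<Rightarrow> nat \<Rightarrow> nat list \<Rightarrow> ctree set" where
  "rooted_colourings m d a w = {t \<in> legal_colourings m d. root_col t = a \<and> inorder t = w}"

lemma finite_rooted_colourings: "finite (rooted_colourings m d a w)"
  by (rule finite_subset[OF _ finite_complete_colourings[of d m]])
    (auto simp: rooted_colourings_def legal_colourings_def)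

lemma rooted_colourings_0:
  assumes "a \<in> {1..m}"
  shows "rooted_colourings m 0 a w = (if w = [a] then {CLeaf a} else {})"
proof -
  have "complete_depth 0 t \<longleftrightarrow> (\<exists>x. t = CLeaf x)" for t by (cases t) auto
  then show ?thesis using assms by (auto simp: rooted_colourings_def legal_colourings_def)
qed

text \<open>The representative in {1..m} of a - b in Z_m.\<close>
definition colour_diff :: "nat \<Rightarrow> nat \<Rightarrow> nat \<Rightarrow> nat" where
  "colour_diff m a b = (a + m - b - 1) mod m + 1"

lemma colour_diff_in_range: "m \<ge> 1 \<Longrightarrow> colour_diff m a b \<in> {1..m}"
  unfolding colour_diff_def by (simp add: Suc_leI)

lemma add_colour_diff_mod:
  assumes "a \<in> {1..m}" "b \<in> {1..m}"
  shows "(b + colour_diff m a b) mod m = a mod m"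
proof -
  have "(b + colour_diff m a b) mod m = (b + 1 + (a + m - b - 1) mod m) mod m"
    unfolding colour_diff_def by (simp add: ac_simps)
  also have "\<dots> = (b + 1 + (a + m - b - 1)) mod m" by (rule mod_add_right_eq)
  also have "b + 1 + (a + m - b - 1) = a + m" using assms by auto
  finally show ?thesis by simp
qed

lemma eq_if_add_mod_eq:
  assumes "(c::nat) \<in> {1..m}" "f \<in> {1..m}" "(b + c) mod m = (b + f) mod m"
  shows "c = f"
proof -
  have "x = y" if "x \<in> {1..m}" "y \<in> {1..m}" "x \<le> y" "(b + x) mod m = (b + y) mod m"
    for x y :: nat
  proof -
    have "m dvd y - x" using that mod_eq_dvd_iff_nat[of "b + x" "b + y" m] by simp
    moreover have "y - x < m" using that by auto
    ultimately have "y - x = 0" by (meson dvd_imp_le leD neq0_conv)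
    then show "x = y" using that(3) by simp
  qed
  from this[of c f] this[of f c] show ?thesis using assms by linarith
qed

lemma colour_diff_unique:
  assumes "a \<in> {1..m}" "b \<in> {1..m}" "c \<in> {1..m}" "a mod m = (b + c) mod m"
  shows "c = colour_diff m a b"
proof (rule eq_if_add_mod_eq)
  show "colour_diff m a b \<in> {1..m}" using colour_diff_in_range assms(1) by auto
  show "(b + c) mod m = (b + colour_diff m a b) mod m"
    using add_colour_diff_mod[OF assms(1,2)] assms(4) by simp
qed fact

lemma word_split_at:
  "take 1 (drop L w) = [a] \<Longrightarrow> w = take L w @ [a] @ drop (Suc L) w"
  by (metis append_Cons append_Nil append_take_drop_id drop_drop plus_1_eq_Suc)

lemma rooted_colourings_Suc:
  assumes a: "a \<in> {1..m}" and L: "L = 2 ^ Suc d - 1"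
  shows "rooted_colourings m (Suc d) a w = (\<Union>b\<in>{1..m}. (\<lambda>(l, r). CNode l a r) `
     (if take 1 (drop L w) = [a]
      then rooted_colourings m d b (take L w) \<times> rooted_colourings m d (colour_diff m a b) (drop (Suc L) w)
      else {}))"
    (is "?A = ?B")
proof
  show "?A \<subseteq> ?B"
  proof
    fix t assume t: "t \<in> ?A"
    then obtain l r where t_eq: "t = CNode l a r"
      by (cases t) (auto simp: rooted_colourings_def legal_colourings_def)
    from t t_eq have sub: "complete_depth d l" "complete_depth d r" "colours_in m l" "colours_in m r"
      "legal m l" "legal m r" "a mod m = (root_col l + root_col r) mod m"
      and w: "w = inorder l @ [a] @ inorder r"
      by (auto simp: rooted_colourings_def legal_colourings_def)
    have "length (inorder l) = L" using length_inorder_complete_depth[OF sub(1)] L by linarith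
    then have split: "take 1 (drop L w) = [a]" "take L w = inorder l" "drop (Suc L) w = inorder r"
      by (simp_all add: w)
    define b where "b = root_col l"
    have b: "b \<in> {1..m}" using colours_in_root_col[OF sub(3)] by (simp add: b_def)
    have "root_col r = colour_diff m a b"
      using colour_diff_unique[OF a b colours_in_root_col[OF sub(4)]] sub(7) by (simp add: b_def)
    then have "l \<in> rooted_colourings m d b (take L w)"
      "r \<in> rooted_colourings m d (colour_diff m a b) (drop (Suc L) w)"
      using sub split by (auto simp: rooted_colourings_def legal_colourings_def b_def)
    then show "t \<in> ?B" using b split by (auto simp: t_eq)
  qed
next
  show "?B \<subseteq> ?A"
  proof
    fix t assume "t \<in> ?B"
    then obtain b l r where b: "b \<in> {1..m}" and split: "take 1 (drop L w) = [a]"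
      and l: "l \<in> rooted_colourings m d b (take L w)"
      and r: "r \<in> rooted_colourings m d (colour_diff m a b) (drop (Suc L) w)"
      and t_eq: "t = CNode l a r"
      by (auto split: if_splits)
    have "a mod m = (root_col l + root_col r) mod m"
      using add_colour_diff_mod[OF a b] l r by (simp add: rooted_colourings_def)
    moreover have "inorder t = w"
      using l r word_split_at[OF split] by (simp add: t_eq rooted_colourings_def)
    ultimately show "t \<in> ?A" using l r a
      by (simp add: t_eq rooted_colourings_def legal_colourings_def)
  qed
qed

lemma card_rooted_colourings_Suc:
  assumes a: "a \<in> {1..m}" and L: "L = 2 ^ Suc d - 1"
  shows "card (rooted_colourings m (Suc d) a w) = (\<Sum>b\<in>{1..m}.
     if take 1 (drop L w) = [a]
     then card (rooted_colourings m d b (take L w))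
        * card (rooted_colourings m d (colour_diff m a b) (drop (Suc L) w))
     else 0)"
proof -
  let ?node = "\<lambda>(l, r). CNode l a r"
  let ?X = "\<lambda>b. if take 1 (drop L w) = [a]
    then rooted_colourings m d b (take L w) \<times> rooted_colourings m d (colour_diff m a b) (drop (Suc L) w)
    else {}"
  have "card (rooted_colourings m (Suc d) a w) = (\<Sum>b\<in>{1..m}. card (?node ` ?X b))"
    unfolding rooted_colourings_Suc[OF a L]
  proof (rule card_UN_disjoint)
    show "\<forall>b\<in>{1..m}. finite (?node ` ?X b)" using finite_rooted_colourings by auto
    show "\<forall>b\<in>{1..m}. \<forall>b'\<in>{1..m}. b \<noteq> b' \<longrightarrow> ?node ` ?X b \<inter> ?node ` ?X b' = {}"
      by (auto simp: rooted_colourings_def)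
  qed simp
  also have "\<dots> = (\<Sum>b\<in>{1..m}. card (?X b))"
    by (rule sum.cong) (auto intro!: card_image simp: inj_on_def)
  finally show ?thesis by (simp add: card_cartesian_product if_distrib cong: if_cong)
qed

fun Pd_rooted :: "nat \<Rightarrow> nat \<Rightarrow> nat \<Rightarrow> 'a::field ncpoly" where
  "Pd_rooted m 0 a = ncvar a"
| "Pd_rooted m (Suc d) a =
     ncsum (map (\<lambda>b. ncprod [Pd_rooted m d b, ncvar a, Pd_rooted m d (colour_diff m a b)]) [1..<m+1])"

lemma sum_list_upt_eq_sum_atLeastAtMost:
  "(\<Sum>x\<leftarrow>[1..<m+1]. f x) = (\<Sum>x\<in>{1..m}. f x :: 'b::comm_monoid_add)"
  by (simp add: sum_list_distinct_conv_sum_set atLeastLessThanSuc_atLeastAtMost del: upt_Suc)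

lemma Pd_rooted_apply:
  assumes m: "m \<ge> 1"
  shows "a \<in> {1..m} \<Longrightarrow> (Pd_rooted m d a w :: 'a::field) = of_nat (card (rooted_colourings m d a w))"
proof (induct d arbitrary: a w)
  case 0
  then show ?case by (simp add: rooted_colourings_0 ncvar_def)
next
  case (Suc d)
  define L where "L = (2::nat) ^ Suc d - 1"
  have homogeneous: "length u = L"
    if b: "b \<in> {1..m}" and nz: "(Pd_rooted m d b u :: 'a) \<noteq> 0" for b u
  proof -
    obtain t where "t \<in> rooted_colourings m d b u"
      using nz Suc.hyps[OF b] by fastforce
    then have "Suc (length u) = 2 ^ Suc d"
      using length_inorder_complete_depth by (auto simp: rooted_colourings_def legal_colourings_def)
    then show ?thesis by (simp add: L_def)
  qed
  have "(Pd_rooted m (Suc d) a w :: 'a) = (\<Sum>b\<in>{1..m}.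
      ncprod [Pd_rooted m d b, ncvar a, Pd_rooted m d (colour_diff m a b)] w)"
    by (simp only: Pd_rooted.simps ncsum_apply sum_list_upt_eq_sum_atLeastAtMost)
  also have "\<dots> = (\<Sum>b\<in>{1..m}. of_nat (if take 1 (drop L w) = [a]
     then card (rooted_colourings m d b (take L w))
        * card (rooted_colourings m d (colour_diff m a b) (drop (Suc L) w))
     else 0))"
  proof (rule sum.cong)
    fix b assume b: "b \<in> {1..m}"
    have c: "colour_diff m a b \<in> {1..m}" using colour_diff_in_range m by auto
    show "(ncprod [Pd_rooted m d b, ncvar a, Pd_rooted m d (colour_diff m a b)] w :: 'a)
      = of_nat (if take 1 (drop L w) = [a]
          then card (rooted_colourings m d b (take L w))
             * card (rooted_colourings m d (colour_diff m a b) (drop (Suc L) w))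
          else 0)"
      by (subst ncprod_var_middle_apply[where L=L])
        (simp_all add: homogeneous[OF b] Suc.hyps[OF b] Suc.hyps[OF c])
  qed simp
  also have "\<dots> = of_nat (card (rooted_colourings m (Suc d) a w))"
    by (simp add: card_rooted_colourings_Suc[OF Suc.prems L_def] del: of_nat_mult)
  finally show ?case .
qed

lemma Pd_eq_ncsum_Pd_rooted:
  assumes m: "m \<ge> 1"
  shows "(Pd m d :: 'a::field ncpoly) = ncsum (map (Pd_rooted m d) [1..<m+1])"
proof
  fix w
  have "{t \<in> legal_colourings m d. inorder t = w} = (\<Union>a\<in>{1..m}. rooted_colourings m d a w)"
    using colours_in_root_col[of m] by (auto simp: legal_colourings_def rooted_colourings_def)
  also have "card \<dots> = (\<Sum>a\<in>{1..m}. card (rooted_colourings m d a w))"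
    by (rule card_UN_disjoint)
      (simp_all add: finite_rooted_colourings, auto simp: rooted_colourings_def)
  finally have "card {t \<in> legal_colourings m d. inorder t = w}
      = (\<Sum>a\<in>{1..m}. card (rooted_colourings m d a w))" .
  then have "(Pd m d :: 'a ncpoly) w = (\<Sum>a\<in>{1..m}. of_nat (card (rooted_colourings m d a w)))"
    by (simp add: Pd_def)
  also have "\<dots> = ncsum (map (Pd_rooted m d) [1..<m+1]) w"
    by (simp only: ncsum_apply sum_list_upt_eq_sum_atLeastAtMost) (simp add: Pd_rooted_apply[OF m])
  finally show "(Pd m d :: 'a ncpoly) w = ncsum (map (Pd_rooted m d) [1..<m+1]) w" .
qed

definition gate_value :: "'a::field gate list \<Rightarrow> nat \<Rightarrow> 'a ncpoly" where
  "gate_value C j = gate_vals C (Suc j) ! j"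

lemma length_gate_vals: "length (gate_vals C k) = k"
  by (induct k) auto

lemma gate_vals_nth: "i < k \<Longrightarrow> gate_vals C k ! i = gate_value C i"
proof (induct k)
  case (Suc k)
  then show ?case
    by (cases "i < k") (auto simp: nth_append length_gate_vals gate_value_def less_Suc_eq)
qed simp

lemma wf_circuit_child_less:
  "wf_circuit C \<Longrightarrow> j < length C \<Longrightarrow> i \<in> set (gate_children (C ! j)) \<Longrightarrow> i < j"
  by (auto simp: wf_circuit_def)

lemma gate_value_unfold: "gate_value C j = gate_val (gate_vals C j) (C ! j)"
  by (simp add: gate_value_def nth_append length_gate_vals)

lemma gate_value_GVar: "C ! j = GVar i \<Longrightarrow> gate_value C j = ncvar i"
  by (simp add: gate_value_unfold)

lemma gate_value_GPlus:
  assumes "wf_circuit C" "j < length C" "C ! j = GPlus cs"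
  shows "gate_value C j = ncsum (map (gate_value C) cs)"
  using wf_circuit_child_less[OF assms(1,2)] assms(3)
  by (simp add: gate_value_unfold gate_vals_nth cong: map_cong)

lemma gate_value_GTimes:
  assumes "wf_circuit C" "j < length C" "C ! j = GTimes cs"
  shows "gate_value C j = ncprod (map (gate_value C) cs)"
  using wf_circuit_child_less[OF assms(1,2)] assms(3)
  by (simp add: gate_value_unfold gate_vals_nth cong: map_cong)

lemma circuit_output_eq_gate_value:
  "C \<noteq> [] \<Longrightarrow> circuit_output C = gate_value C (length C - 1)"
  by (simp add: circuit_output_def last_conv_nth length_gate_vals gate_vals_nth
      flip: length_greater_0_conv)

definition gate_parse_shapes :: "'a gate list \<Rightarrow> nat \<Rightarrow> shape set" where
  "gate_parse_shapes C j = shapes_upto C (Suc j) ! j"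

lemma length_shapes_upto: "length (shapes_upto C k) = k"
  by (induct k) auto

lemma shapes_upto_nth: "i < k \<Longrightarrow> shapes_upto C k ! i = gate_parse_shapes C i"
proof (induct k)
  case (Suc k)
  then show ?case
    by (cases "i < k") (auto simp: nth_append length_shapes_upto gate_parse_shapes_def less_Suc_eq)
qed simp

lemma gate_parse_shapes_unfold: "gate_parse_shapes C j = gate_shapes (shapes_upto C j) (C ! j)"
  by (simp add: gate_parse_shapes_def nth_append length_shapes_upto)

lemma gate_parse_shapes_GVar: "C ! j = GVar i \<Longrightarrow> gate_parse_shapes C j = {SLeaf}"
  by (simp add: gate_parse_shapes_unfold)

lemma gate_parse_shapes_GPlus:
  assumes "wf_circuit C" "j < length C" "C ! j = GPlus cs" "cs \<noteq> []"
    and "\<forall>i\<in>set cs. gate_parse_shapes C i = {s}"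
  shows "gate_parse_shapes C j = {SPlus s}"
proof -
  have "gate_parse_shapes C j = (\<Union>i\<in>set cs. SPlus ` gate_parse_shapes C i)"
    using wf_circuit_child_less[OF assms(1,2)] assms(3)
    by (simp add: gate_parse_shapes_unfold shapes_upto_nth)
  then show ?thesis using assms(4,5) by auto
qed

lemma list_all2_mem_singletons:
  assumes "list_all2 (\<lambda>i s. P i = {s}) cs ss"
  shows "list_all2 (\<lambda>t j. t \<in> P j) ts cs \<longleftrightarrow> ts = ss"
  using assms
proof (induct cs arbitrary: ss ts)
  case (Cons c cs)
  then obtain s ss' where "ss = s # ss'" "P c = {s}" "list_all2 (\<lambda>i s. P i = {s}) cs ss'"
    by (auto simp: list_all2_Cons1)
  with Cons.hyps show ?case by (cases ts) auto
qed simp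

lemma gate_parse_shapes_GTimes:
  assumes "wf_circuit C" "j < length C" "C ! j = GTimes cs"
    and "list_all2 (\<lambda>i s. gate_parse_shapes C i = {s}) cs ss"
  shows "gate_parse_shapes C j = {STimes ss}"
proof -
  have "gate_parse_shapes C j = {STimes ts |ts. list_all2 (\<lambda>t i. t \<in> gate_parse_shapes C i) ts cs}"
    using wf_circuit_child_less[OF assms(1,2)] assms(3)
    by (simp add: gate_parse_shapes_unfold shapes_upto_nth cong: list.rel_cong)
  then show ?thesis using list_all2_mem_singletons[OF assms(4)] by auto
qed

lemma parse_tree_shapes_eq_gate_parse_shapes:
  "C \<noteq> [] \<Longrightarrow> parse_tree_shapes C = gate_parse_shapes C (length C - 1)"
  by (simp add: parse_tree_shapes_def last_conv_nth length_shapes_upto shapes_upto_nth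
      flip: length_greater_0_conv)

text \<open>Layout: gate a - 1 is the variable x_a. For k < d, the block of m^2 + m gates starting
  at m + k (m^2 + m) holds first the product gates times_gate m k a b, computing
  Q(k, b) x_a Q(k, a - b), and then the sum gates level_gate m (k + 1) a, computing Q(k + 1, a),
  where Q is Pd_rooted m.\<close>
fun level_gate :: "nat \<Rightarrow> nat \<Rightarrow> nat \<Rightarrow> nat" where
  "level_gate m 0 a = a - 1"
| "level_gate m (Suc k) a = m + k * (m*m + m) + m*m + (a - 1)"

definition times_gate :: "nat \<Rightarrow> nat \<Rightarrow> nat \<Rightarrow> nat \<Rightarrow> nat" where
  "times_gate m k a b = m + k * (m*m + m) + (a - 1) * m + (b - 1)"

definition layer_gate :: "nat \<Rightarrow> nat \<Rightarrow> nat \<Rightarrow> 'a gate" where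
  "layer_gate m k s =
    (if s < m*m
     then GTimes [level_gate m k (s mod m + 1), level_gate m 0 (s div m + 1),
                  level_gate m k (colour_diff m (s div m + 1) (s mod m + 1))]
     else GPlus (map (times_gate m k (s - m*m + 1)) [1..<m+1]))"

definition Pd_gate :: "nat \<Rightarrow> nat \<Rightarrow> 'a gate" where
  "Pd_gate m j =
    (if j < m then GVar (j + 1) else layer_gate m ((j - m) div (m*m + m)) ((j - m) mod (m*m + m)))"

definition Pd_circuit :: "nat \<Rightarrow> nat \<Rightarrow> 'a gate list" where
  "Pd_circuit m d = map (Pd_gate m) [0..<m + d * (m*m + m)] @ [GPlus (map (level_gate m d) [1..<m+1])]"

lemma length_Pd_circuit: "length (Pd_circuit m d) = m + d * (m*m + m) + 1"
  by (simp add: Pd_circuit_def)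

lemma Pd_circuit_nth: "j < m + d * (m*m + m) \<Longrightarrow> Pd_circuit m d ! j = Pd_gate m j"
  by (simp add: Pd_circuit_def nth_append)

lemma Pd_circuit_last:
  "Pd_circuit m d ! (m + d * (m*m + m)) = GPlus (map (level_gate m d) [1..<m+1])"
  by (simp add: Pd_circuit_def nth_append)

lemma mult_add_div_mod_eq:
  fixes k M s :: nat
  assumes "s < M"
  shows "(k * M + s) div M = k" "(k * M + s) mod M = s"
  using assms by (simp_all add: div_add1_eq)

lemma Pd_gate_layer: "s < m*m + m \<Longrightarrow> Pd_gate m (m + k * (m*m + m) + s) = layer_gate m k s"
  by (simp add: Pd_gate_def mult_add_div_mod_eq)

lemma layer_index_less:
  assumes "k < d" "s < M"
  shows "m + k * M + s < m + d * (M::nat)"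
proof -
  have "m + k * M + s < m + Suc k * M" using assms(2) by simp
  also have "\<dots> \<le> m + d * M" using assms(1) by (intro add_left_mono mult_le_mono1) simp
  finally show ?thesis .
qed

lemma level_gate_less: "a \<in> {1..m} \<Longrightarrow> level_gate m k a < m + k * (m*m + m)"
  by (cases k) auto

lemma times_gate_offset_less:
  fixes a b m :: nat
  assumes "a \<in> {1..m}" "b \<in> {1..m}"
  shows "(a - 1) * m + (b - 1) < m*m"
proof -
  have "b - 1 < m" using assms by (cases b) auto
  then have "(a - 1) * m + (b - 1) < (a - 1) * m + m" by simp
  also have "\<dots> = a * m" using assms by (cases a) auto
  also have "\<dots> \<le> m*m" using assms by simp
  finally show ?thesis .
qed

lemma layer_gate_children_less:
  assumes m: "m \<ge> 1" and s: "s < m*m + m"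
  shows "\<forall>j\<in>set (gate_children (layer_gate m k s :: 'a gate)). j < m + k * (m*m + m) + s"
proof (cases "s < m*m")
  case True
  have level: "level_gate m k b < m + k * (m*m + m) + s" if "b \<in> {1..m}" for b
    using level_gate_less[OF that, of k] by linarith
  have "s mod m + 1 \<in> {1..m}" "colour_diff m (s div m + 1) (s mod m + 1) \<in> {1..m}"
    using m colour_diff_in_range by (auto simp: Suc_leI)
  moreover have "s div m < m" using True by (simp add: less_mult_imp_div_less)
  ultimately show ?thesis using True level by (simp add: layer_gate_def)
next
  case False
  have "times_gate m k (s - m*m + 1) b < m + k * (m*m + m) + s" if "b \<in> {1..m}" for b
  proof -
    have "s - m*m + 1 \<in> {1..m}" using False s by auto
    from times_gate_offset_less[OF this that] have "(s - m*m) * m + (b - 1) < m*m" by simp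
    then show ?thesis using False by (simp add: times_gate_def)
  qed
  then show ?thesis using False by (auto simp: layer_gate_def)
qed

lemma wf_Pd_circuit: "m \<ge> 1 \<Longrightarrow> wf_circuit (Pd_circuit m d :: 'a gate list)"
  unfolding wf_circuit_def
proof (intro conjI allI impI ballI)
  fix j i assume m: "m \<ge> 1" and j: "j < length (Pd_circuit m d :: 'a gate list)"
    and i: "i \<in> set (gate_children ((Pd_circuit m d :: 'a gate list) ! j))"
  show "i < j"
  proof (cases "j < m + d * (m*m + m)")
    case True
    show ?thesis
    proof (cases "j < m")
      case True
      then show ?thesis using i \<open>j < m + d * (m*m + m)\<close> by (simp add: Pd_circuit_nth Pd_gate_def)
    next
      case False
      define k s where "k = (j - m) div (m*m + m)" and "s = (j - m) mod (m*m + m)"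
      have s: "s < m*m + m" using m by (simp add: s_def)
      have "k * (m*m + m) + s = j - m" unfolding k_def s_def by (rule div_mult_mod_eq)
      then have "j = m + k * (m*m + m) + s" using False by simp
      then show ?thesis
        using i True layer_gate_children_less[OF m s, of k, where 'a='a]
        by (simp add: Pd_circuit_nth Pd_gate_layer[OF s])
    qed
  next
    case False
    then have "j = m + d * (m*m + m)" using j by (simp add: length_Pd_circuit)
    then show ?thesis using i level_gate_less by (auto simp: Pd_circuit_last)
  qed
qed (simp add: Pd_circuit_def)

lemma Pd_circuit_var_gate:
  "a \<in> {1..m} \<Longrightarrow> Pd_circuit m d ! level_gate m 0 a = GVar a"
  by (auto simp: Pd_circuit_nth Pd_gate_def)

lemma Pd_circuit_plus_gate:
  assumes "k < d" "a \<in> {1..m}"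
  shows "level_gate m (Suc k) a < m + d * (m*m + m)"
    and "Pd_circuit m d ! level_gate m (Suc k) a = GPlus (map (times_gate m k a) [1..<m+1])"
proof -
  have s: "m*m + (a - 1) < m*m + m" using assms(2) by auto
  have index: "level_gate m (Suc k) a = m + k * (m*m + m) + (m*m + (a - 1))" by simp
  show "level_gate m (Suc k) a < m + d * (m*m + m)"
    unfolding index by (rule layer_index_less[OF assms(1) s])
  then show "Pd_circuit m d ! level_gate m (Suc k) a = GPlus (map (times_gate m k a) [1..<m+1])"
    using assms(2) by (simp only: index Pd_circuit_nth Pd_gate_layer[OF s]) (auto simp: layer_gate_def)
qed

lemma Pd_circuit_times_gate:
  assumes "k < d" "a \<in> {1..m}" "b \<in> {1..m}"
  shows "times_gate m k a b < m + d * (m*m + m)"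
    and "Pd_circuit m d ! times_gate m k a b =
      GTimes [level_gate m k b, level_gate m 0 a, level_gate m k (colour_diff m a b)]"
proof -
  define s where "s = (a - 1) * m + (b - 1)"
  have s: "s < m*m" using times_gate_offset_less[OF assms(2,3)] by (simp add: s_def)
  have index: "times_gate m k a b = m + k * (m*m + m) + s" by (simp add: times_gate_def s_def)
  show lt: "times_gate m k a b < m + d * (m*m + m)"
    unfolding index using layer_index_less[OF assms(1), of s "m*m + m" m] s by simp
  have "b - 1 < m" using assms(3) by (cases b) auto
  then have "s div m = a - 1" "s mod m = b - 1"
    unfolding s_def by (rule mult_add_div_mod_eq)+
  then have "s div m + 1 = a" "s mod m + 1 = b" using assms(2,3) by auto
  with lt show "Pd_circuit m d ! times_gate m k a b =
      GTimes [level_gate m k b, level_gate m 0 a, level_gate m k (colour_diff m a b)]"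
    using s by (simp add: index Pd_circuit_nth Pd_gate_layer layer_gate_def)
qed

lemma Pd_circuit_level_value:
  assumes m: "m \<ge> 1"
  shows "k \<le> d \<Longrightarrow> a \<in> {1..m} \<Longrightarrow>
    gate_value (Pd_circuit m d :: 'a::field gate list) (level_gate m k a) = Pd_rooted m k a"
proof (induct k arbitrary: a)
  case 0
  then show ?case using gate_value_GVar[OF Pd_circuit_var_gate] by simp
next
  case (Suc k)
  let ?C = "Pd_circuit m d :: 'a gate list"
  have wf: "wf_circuit ?C" by (rule wf_Pd_circuit[OF m])
  have k: "k < d" using Suc.prems(1) by simp
  have len: "j < length ?C" if "j < m + d * (m*m + m)" for j
    using that by (simp add: length_Pd_circuit)
  have times: "gate_value ?C (times_gate m k a b)
      = ncprod [Pd_rooted m k b, ncvar a, Pd_rooted m k (colour_diff m a b)]"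
    if b: "b \<in> {1..m}" for b
  proof -
    note gate = Pd_circuit_times_gate[OF k Suc.prems(2) b]
    have "colour_diff m a b \<in> {1..m}" using colour_diff_in_range m by auto
    then show ?thesis
      using gate_value_GTimes[OF wf len[OF gate(1)] gate(2)] k b
        gate_value_GVar[OF Pd_circuit_var_gate[OF Suc.prems(2), of d, where 'a='a]] Suc.hyps
      by simp
  qed
  note gate = Pd_circuit_plus_gate[OF k Suc.prems(2)]
  have "gate_value ?C (level_gate m (Suc k) a)
      = ncsum (map (gate_value ?C) (map (times_gate m k a) [1..<m+1]))"
    by (rule gate_value_GPlus[OF wf len[OF gate(1)] gate(2)])
  also have "map (gate_value ?C) (map (times_gate m k a) [1..<m+1])
      = map (\<lambda>b. ncprod [Pd_rooted m k b, ncvar a, Pd_rooted m k (colour_diff m a b)]) [1..<m+1]"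
    unfolding map_map comp_def using times by (intro map_cong) auto
  also have "ncsum \<dots> = Pd_rooted m (Suc k) a" by simp
  finally show ?case .
qed

fun level_shape :: "nat \<Rightarrow> shape" where
  "level_shape 0 = SLeaf"
| "level_shape (Suc k) = SPlus (STimes [level_shape k, SLeaf, level_shape k])"

lemma Pd_circuit_level_parse_shapes:
  assumes m: "m \<ge> 1"
  shows "k \<le> d \<Longrightarrow> a \<in> {1..m} \<Longrightarrow>
    gate_parse_shapes (Pd_circuit m d :: 'a gate list) (level_gate m k a) = {level_shape k}"
proof (induct k arbitrary: a)
  case 0
  then show ?case using gate_parse_shapes_GVar[OF Pd_circuit_var_gate] by simp
next
  case (Suc k)
  let ?C = "Pd_circuit m d :: 'a gate list"
  have wf: "wf_circuit ?C" by (rule wf_Pd_circuit[OF m])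
  have k: "k < d" using Suc.prems(1) by simp
  have len: "j < length ?C" if "j < m + d * (m*m + m)" for j
    using that by (simp add: length_Pd_circuit)
  have times:
    "gate_parse_shapes ?C (times_gate m k a b) = {STimes [level_shape k, SLeaf, level_shape k]}"
    if b: "b \<in> {1..m}" for b
  proof (rule gate_parse_shapes_GTimes[OF wf len[OF Pd_circuit_times_gate(1)[OF k Suc.prems(2) b]]
        Pd_circuit_times_gate(2)[OF k Suc.prems(2) b]])
    have "colour_diff m a b \<in> {1..m}" using colour_diff_in_range m by auto
    then show "list_all2 (\<lambda>i s. gate_parse_shapes ?C i = {s})
        [level_gate m k b, level_gate m 0 a, level_gate m k (colour_diff m a b)]
        [level_shape k, SLeaf, level_shape k]"
      using gate_parse_shapes_GVar[OF Pd_circuit_var_gate[OF Suc.prems(2), of d, where 'a='a]]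
        Suc.hyps k b
      by simp
  qed
  note gate = Pd_circuit_plus_gate[OF k Suc.prems(2)]
  have "gate_parse_shapes ?C (level_gate m (Suc k) a)
      = {SPlus (STimes [level_shape k, SLeaf, level_shape k])}"
    by (rule gate_parse_shapes_GPlus[OF wf len[OF gate(1)] gate(2)]) (use m times in auto)
  then show ?case by simp
qed

lemma Pd_circuit_computes_Pd: "m \<ge> 1 \<Longrightarrow> computes (Pd_circuit m d :: 'a::field gate list) (Pd m d)"
proof -
  assume m: "m \<ge> 1"
  let ?C = "Pd_circuit m d :: 'a gate list"
  have "circuit_output ?C = gate_value ?C (m + d * (m*m + m))"
    by (simp add: circuit_output_eq_gate_value length_Pd_circuit Pd_circuit_def)
  also have "\<dots> = ncsum (map (gate_value ?C) (map (level_gate m d) [1..<m+1]))"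
    by (rule gate_value_GPlus[OF wf_Pd_circuit[OF m] _ Pd_circuit_last]) (simp add: length_Pd_circuit)
  also have "map (gate_value ?C) (map (level_gate m d) [1..<m+1]) = map (Pd_rooted m d) [1..<m+1]"
    by (auto simp: Pd_circuit_level_value[OF m])
  also have "ncsum \<dots> = Pd m d" by (rule Pd_eq_ncsum_Pd_rooted[OF m, symmetric])
  finally show ?thesis by (simp add: computes_def wf_Pd_circuit[OF m])
qed

lemma UPT_Pd_circuit: "m \<ge> 1 \<Longrightarrow> UPT (Pd_circuit m d)"
proof -
  assume m: "m \<ge> 1"
  let ?C = "Pd_circuit m d :: 'a gate list"
  have "parse_tree_shapes ?C = gate_parse_shapes ?C (m + d * (m*m + m))"
    by (simp add: parse_tree_shapes_eq_gate_parse_shapes length_Pd_circuit Pd_circuit_def)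
  also have "\<dots> = {SPlus (level_shape d)}"
    by (rule gate_parse_shapes_GPlus[OF wf_Pd_circuit[OF m] _ Pd_circuit_last])
      (use m in \<open>auto simp: length_Pd_circuit Pd_circuit_level_parse_shapes\<close>)
  finally show ?thesis by (simp add: UPT_def)
qed

lemma layer_fan_in: "(\<Sum>s=0..<m*m + m. length (gate_children (layer_gate m k s :: 'a gate))) = 4 * (m*m)"
proof -
  let ?fan_in = "\<lambda>s. length (gate_children (layer_gate m k s :: 'a gate))"
  have "(\<Sum>s=0..<m*m + m. ?fan_in s) = (\<Sum>s=0..<m*m. ?fan_in s) + (\<Sum>s=m*m..<m*m + m. ?fan_in s)"
    by (simp add: sum.atLeastLessThan_concat)
  also have "(\<Sum>s=0..<m*m. ?fan_in s) = (\<Sum>s=0..<m*m. 3)"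
    by (rule sum.cong) (simp_all add: layer_gate_def)
  also have "(\<Sum>s=m*m..<m*m + m. ?fan_in s) = (\<Sum>s=m*m..<m*m + m. m)"
    by (rule sum.cong) (simp_all add: layer_gate_def)
  finally show ?thesis by simp
qed

lemma Pd_gates_fan_in:
  "(\<Sum>j=0..<m + d * (m*m + m). length (gate_children (Pd_gate m j :: 'a gate))) = d * (4 * (m*m))"
proof (induct d)
  case 0
  show ?case by (simp add: Pd_gate_def)
next
  case (Suc d)
  let ?M = "m*m + m" and ?fan_in = "\<lambda>j. length (gate_children (Pd_gate m j :: 'a gate))"
  have "(\<Sum>j=0..<m + Suc d * ?M. ?fan_in j)
      = (\<Sum>j=0..<m + d * ?M. ?fan_in j) + (\<Sum>j=0 + (m + d * ?M)..<?M + (m + d * ?M). ?fan_in j)"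
    by (simp add: sum.atLeastLessThan_concat ac_simps)
  also have "(\<Sum>j=0 + (m + d * ?M)..<?M + (m + d * ?M). ?fan_in j)
      = (\<Sum>s=0..<?M. length (gate_children (layer_gate m d s :: 'a gate)))"
    unfolding sum.shift_bounds_nat_ivl
  proof (rule sum.cong)
    fix s assume "s \<in> {0..<?M}"
    then have "Pd_gate m (s + (m + d * ?M)) = (layer_gate m d s :: 'a gate)"
      using Pd_gate_layer[of s m d] by (simp add: add.commute)
    then show "?fan_in (s + (m + d * ?M)) = length (gate_children (layer_gate m d s :: 'a gate))"
      by simp
  qed simp
  finally show ?case by (simp add: Suc layer_fan_in)
qed

lemma circuit_size_Pd_circuit:
  "circuit_size (Pd_circuit m d :: 'a gate list) = m + d * (m*m + m) + 1 + d * (4 * (m*m)) + m"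
proof -
  have "(\<Sum>g\<leftarrow>(Pd_circuit m d :: 'a gate list). length (gate_children g))
      = (\<Sum>j=0..<m + d * (m*m + m). length (gate_children (Pd_gate m j :: 'a gate))) + m"
    by (simp add: Pd_circuit_def comp_def flip: sum_set_upt_conv_sum_list_nat)
  then show ?thesis by (simp add: circuit_size_def length_Pd_circuit Pd_gates_fan_in)
qed

lemma circuit_size_Pd_circuit_le:
  assumes "m \<ge> 1" "d \<ge> 1"
  shows "circuit_size (Pd_circuit m d :: 'a gate list) \<le> 10 * m^2 * d"
proof -
  have bounds: "m \<le> m*m*d" "1 \<le> m*m*d" "d*m \<le> m*m*d" using assms by (simp_all add: Suc_le_eq)
  have "circuit_size (Pd_circuit m d :: 'a gate list) = 2*m + d*m + 1 + 5*(m*m*d)"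
    by (simp add: circuit_size_Pd_circuit algebra_simps)
  also have "\<dots> \<le> 10 * (m*m*d)" using bounds by linarith
  finally show ?thesis by (simp add: power2_eq_square)
qed

theorem lemma4p1:
  "\<exists>c::nat. \<forall>m d. m \<ge> 1 \<longrightarrow> d \<ge> 1 \<longrightarrow>
     (\<exists>C :: 'a::field gate list. computes C (Pd m d) \<and> UPT C \<and>
        circuit_size C \<le> c * m^2 * d)"
  using Pd_circuit_computes_Pd UPT_Pd_circuit circuit_size_Pd_circuit_le by blast

end
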